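(* Let $A\subseteq\mathbb{R}$ be an open invex set with respect to a function $\eta:A\times A\to\mathbb{R}$, and suppose $\eta$ satisfies Condition C. Let $a,b\in A$ with $a<a+\eta(b,a)$. Let $f:A\to(0,\infty)$ be preinvex on $A$ with respect to $\eta$, with $f$ Lebesgue integrable on $[a,a+\eta(b,a)]$. Then for every $\alpha>0$, \[ f\left(\frac{2a+\eta(b,a)}{2}\right)\le \frac{\Gamma(\alpha+1)}{2\eta^{\alpha}(b,a)}\Big[J_{a^+}^{\alpha}f\big(a+\eta(b,a)\big)+J_{(a+\eta(b,a))^-}^{\alpha}f(a)\Big]\le \frac{f(a)+f(a+\eta(b,a))}{2}\le\frac{f(a)+f(b)}{2}. \]
   Context: A set $A\subseteq\mathbb{R}$ is invex with respect to $\eta:A\times A\to\mathbb{R}$ if $x+t\eta(y,x)\in A$ for all $x,y\in A$ and $t\in[0,1]$. A function $f$ on an invex set $A$ is preinvex with respect to $\eta$ if $f(x+t\eta(y,x))\le(1-t)f(x)+tf(y)$ for all $x,y\in A$, $t\in[0,1]$. Condition C: for all $x,y\in A$ and $t\in[0,1]$, $\eta(y,y+t\eta(x,y))=-t\eta(x,y)$ and $\eta(x,y+t\eta(x,y))=(1-t)\eta(x,y)$. For $g\in L[c,d]$ and $\alpha>0$, the Riemann–Liouville fractional integrals are $J_{c^+}^{\alpha}g(x)=\frac{1}{\Gamma(\alpha)}\int_c^x(x-t)^{\alpha-1}g(t)\,dt$ for $x>c$ and $J_{d^-}^{\alpha}g(x)=\frac{1}{\Gamma(\alpha)}\int_x^d(t-x)^{\alpha-1}g(t)\,dt$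 for $x<d$; here $\eta^{\alpha}(b,a)$ means $(\eta(b,a))^{\alpha}$. *)

theory Defs
  imports "HOL-Analysis.Analysis"
begin

definition invex :: "real set \<Rightarrow> (real \<Rightarrow> real \<Rightarrow> real) \<Rightarrow> bool" where
  "invex A \<eta> \<longleftrightarrow> (\<forall>x\<in>A. \<forall>y\<in>A. \<forall>t\<in>{0..1}. x + t * \<eta> y x \<in> A)"

definition preinvex :: "(real \<Rightarrow> real) \<Rightarrow> real set \<Rightarrow> (real \<Rightarrow> real \<Rightarrow> real) \<Rightarrow> bool" where
  "preinvex f A \<eta> \<longleftrightarrow> (\<forall>x\<in>A. \<forall>y\<in>A. \<forall>t\<in>{0..1}.
      f (x + t * \<eta> y x) \<le> (1 - t) * f x + t * f y)"

definition condition_C :: "real set \<Rightarrow> (real \<Rightarrow> real \<Rightarrow> real) \<Rightarrow> bool" where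
  "condition_C A \<eta> \<longleftrightarrow> (\<forall>x\<in>A. \<forall>y\<in>A. \<forall>t\<in>{0..1}.
      \<eta> y (y + t * \<eta> x y) = - t * \<eta> x y \<and>
      \<eta> x (y + t * \<eta> x y) = (1 - t) * \<eta> x y)"

definition RL_left :: "real \<Rightarrow> real \<Rightarrow> (real \<Rightarrow> real) \<Rightarrow> real \<Rightarrow> real" where
  "RL_left \<alpha> c g x = (1 / Gamma \<alpha>) * (LINT t:{c..x}|lborel. (x - t) powr (\<alpha> - 1) * g t)"

definition RL_right :: "real \<Rightarrow> real \<Rightarrow> (real \<Rightarrow> real) \<Rightarrow> real \<Rightarrow> real" where
  "RL_right \<alpha> d g x = (1 / Gamma \<alpha>) * (LINT t:{x..d}|lborel. (t - x) powr (\<alpha> - 1) * g t)"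

end

theory Submission
  imports Defs
begin

text \<open>
  Condition C makes \<open>\<eta>\<close> affine along the segment from \<open>a\<close> to \<open>c = a + \<eta>(b,a)\<close>:
  \<open>\<eta>(a + q\<eta>(b,a), a + p\<eta>(b,a)) = (q - p)\<eta>(b,a)\<close>. So on \<open>[a,c]\<close> the preinvexity
  inequality is ordinary convexity, and the claim becomes the Hermite--Hadamard inequality
  for Riemann--Liouville integrals of a convex function. That inequality is Fejer's
  weighted Hermite--Hadamard inequality for the symmetric weight
  \<open>(c - t) powr (\<alpha> - 1) + (t - a) powr (\<alpha> - 1)\<close>, whose integral over \<open>[a,c]\<close> is
  \<open>2 (c - a) powr \<alpha> / \<alpha>\<close>;
  Fejer's inequality itself follows by pairing \<open>t\<close> with \<open>a + c - t\<close>.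
  The last inequality is preinvexity at \<open>t = 1\<close>.
\<close>

lemma eta_on_segment:
  assumes inv: "invex A \<eta>" and C: "condition_C A \<eta>" and a: "a \<in> A" and b: "b \<in> A"
    and p: "p \<in> {0..1}" and q: "q \<in> {0..1}"
  shows "\<eta> (a + p * \<eta> b a) (a + q * \<eta> b a) = (p - q) * \<eta> b a"
proof -
  define e where "e = \<eta> b a"
  have shift: "\<eta> y (y + t * \<eta> x y) = - t * \<eta> x y" if "x \<in> A" "y \<in> A" "t \<in> {0..1}" for x y t
    using C that unfolding condition_C_def by blast
  have pA: "a + p * e \<in> A"
    using inv a b p unfolding invex_def e_def by blast
  \<comment> \<open>Reach \<open>a + q e\<close> from \<open>a + p e\<close> along the \<open>\<eta>\<close>-segment towards \<open>b\<close> or towards \<open>a\<close>.\<close>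
  consider "p \<le> q" | "q < p" by linarith
  then have "\<eta> (a + p * e) (a + q * e) = (p - q) * e"
  proof cases
    case 1
    define t where "t = (q - p) / (1 - p)"
    have t: "t \<in> {0..1}" and tp: "t * ((1 - p) * e) = (q - p) * e"
      using 1 p q by (cases "p = 1"; auto simp: t_def field_simps)+
    have "\<eta> b (a + p * e) = (1 - p) * e"
      using C a b p unfolding condition_C_def e_def by blast
    with shift[OF b pA t] have "\<eta> (a + p * e) (a + p * e + t * ((1 - p) * e)) = - (t * ((1 - p) * e))"
      by simp
    then show ?thesis
      unfolding tp by (simp add: algebra_simps)
  next
    case 2
    define t where "t = (p - q) / p"
    have t: "t \<in> {0..1}" and tp: "t * (- p * e) = (q - p) * e"
      using 2 q by (auto simp: t_def field_simps)
    have "\<eta> a (a + p * e) = - p * e"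
      using C a b p unfolding condition_C_def e_def by blast
    with shift[OF a pA t] have "\<eta> (a + p * e) (a + p * e + t * (- p * e)) = - (t * (- p * e))"
      by simp
    then show ?thesis
      unfolding tp by (simp add: algebra_simps)
  qed
  then show ?thesis by (simp add: e_def)
qed

lemma preinvex_imp_convex_on_segment:
  assumes inv: "invex A \<eta>" and C: "condition_C A \<eta>" and a: "a \<in> A" and b: "b \<in> A"
    and e: "0 \<le> \<eta> b a" and pre: "preinvex f A \<eta>"
  shows "convex_on {a..a + \<eta> b a} f"
proof (rule convex_onI)
  show "convex {a..a + \<eta> b a}" by (rule convex_real_interval)
next
  fix t x y :: real assume t: "0 < t" "t < 1" and x: "x \<in> {a..a + \<eta> b a}" and y: "y \<in> {a..a + \<eta> b a}"
  define e where "e = \<eta> b a"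
  have param: "(z - a) / e \<in> {0..1} \<and> z = a + (z - a) / e * e" if "z \<in> {a..a + e}" for z
    using that e by (cases "e = 0") (auto simp: e_def field_simps)
  define p q where "p = (x - a) / e" and "q = (y - a) / e"
  have p: "p \<in> {0..1}" and xp: "x = a + p * e" and q: "q \<in> {0..1}" and yq: "y = a + q * e"
    using param x y unfolding p_def q_def e_def by auto
  have "x \<in> A" "y \<in> A"
    using inv a b p q unfolding invex_def xp yq e_def by auto
  then have "f (x + t * \<eta> y x) \<le> (1 - t) * f x + t * f y"
    using pre t unfolding preinvex_def by auto
  moreover have "\<eta> y x = y - x"
    using eta_on_segment[OF inv C a b q p] unfolding xp yq e_def by (simp add: algebra_simps)
  ultimately show "f ((1 - t) *\<^sub>R x + t *\<^sub>R y) \<le> (1 - t) * f x + t * f y"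
    by (simp add: algebra_simps)
qed

lemma convex_on_Icc_midpoint_le:
  fixes f :: "real \<Rightarrow> real"
  assumes "convex_on {a..c} f" "x \<in> {a..c}"
  shows "2 * f ((a + c) / 2) \<le> f x + f (a + c - x)"
proof -
  have "f ((1 - 1/2) *\<^sub>R x + (1/2) *\<^sub>R (a + c - x)) \<le> (1 - 1/2) * f x + (1/2) * f (a + c - x)"
    using assms by (intro convex_onD[OF assms(1)]) auto
  then show ?thesis by (simp add: field_simps)
qed

lemma convex_on_Icc_reflect_le:
  fixes f :: "real \<Rightarrow> real"
  assumes "convex_on {a..c} f" "x \<in> {a..c}"
  shows "f x + f (a + c - x) \<le> f a + f c"
proof (cases "a = c")
  case True
  with assms(2) show ?thesis by simp
next
  case False
  have "f x \<le> (f c - f a) / (c - a) * (x - a) + f a"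
    using convex_onD_Icc'[OF assms] by simp
  moreover have "f (a + c - x) \<le> (f c - f a) / (c - a) * (c - x) + f a"
    using convex_onD_Icc'[OF assms(1), of "a + c - x"] assms(2) by simp
  moreover have "(f c - f a) / (c - a) * (x - a) + (f c - f a) / (c - a) * (c - x)
      = (f c - f a) / (c - a) * (c - a)"
    by (simp add: right_diff_distrib)
  moreover have "(f c - f a) / (c - a) * (c - a) = f c - f a"
    using False by simp
  ultimately show ?thesis by linarith
qed

lemma convex_on_Icc_abs_bound:
  fixes f :: "real \<Rightarrow> real"
  assumes "convex_on {a..c} f" "x \<in> {a..c}"
  shows "\<bar>f x\<bar> \<le> \<bar>f a\<bar> + \<bar>f c\<bar> + 2 * \<bar>f ((a + c) / 2)\<bar>"
proof -
  have "f x \<le> max (f a) (f c)" "f (a + c - x) \<le> max (f a) (f c)"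
    using convex_on_le_max[OF assms(1)] assms(2) by auto
  moreover have "2 * f ((a + c) / 2) \<le> f x + f (a + c - x)"
    by (rule convex_on_Icc_midpoint_le[OF assms])
  ultimately show ?thesis by linarith
qed

lemma has_integral_reflect_Icc:
  fixes g :: "real \<Rightarrow> 'a::banach"
  assumes "(g has_integral I) {a..c}"
  shows "((\<lambda>x. g (a + c - x)) has_integral I) {a..c}"
proof -
  have "((\<lambda>x. g (- x)) has_integral I) {-c..-a}"
    using assms by simp
  from has_integral_shift_real_ivl[OF this, of "-(a + c)"] show ?thesis
    by (simp add: algebra_simps)
qed

lemma Hermite_Hadamard_Fejer:
  fixes f w :: "real \<Rightarrow> real"
  assumes conv: "convex_on {a..c} f"
    and w: "(w has_integral W) {a..c}" and wf: "((\<lambda>x. w x * f x) has_integral I) {a..c}"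
    and w_nonneg: "\<And>x. x \<in> {a..c} \<Longrightarrow> 0 \<le> w x"
    and w_sym: "\<And>x. x \<in> {a..c} \<Longrightarrow> w (a + c - x) = w x"
  shows "f ((a + c) / 2) * W \<le> I \<and> I \<le> (f a + f c) / 2 * W"
proof -
  have "((\<lambda>x. w (a + c - x) * f (a + c - x)) has_integral I) {a..c}"
    using has_integral_reflect_Icc[OF wf] .
  then have wf_refl: "((\<lambda>x. w x * f (a + c - x)) has_integral I) {a..c}"
    by (rule has_integral_eq[rotated]) (simp add: w_sym)
  have sum: "((\<lambda>x. w x * (f x + f (a + c - x))) has_integral 2 * I) {a..c}"
    using has_integral_add[OF wf wf_refl] by (simp add: distrib_left)
  have "W * (2 * f ((a + c) / 2)) \<le> 2 * I"
    by (rule has_integral_le[OF has_integral_mult_left[OF w] sum])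
      (simp add: mult_left_mono w_nonneg convex_on_Icc_midpoint_le[OF conv])
  moreover have "2 * I \<le> W * (f a + f c)"
    by (rule has_integral_le[OF sum has_integral_mult_left[OF w]])
      (simp add: mult_left_mono w_nonneg convex_on_Icc_reflect_le[OF conv])
  ultimately show ?thesis by (simp add: mult.commute)
qed

lemma set_integrable_mult_bounded:
  fixes f g :: "'a \<Rightarrow> real"
  assumes g: "set_integrable M S g" and f: "set_integrable M S f"
    and bound: "\<And>x. x \<in> S \<Longrightarrow> \<bar>f x\<bar> \<le> B"
  shows "set_integrable M S (\<lambda>x. g x * f x)"
proof (rule set_integrable_bound)
  show "set_integrable M S (\<lambda>x. B * g x)"
    using g by simp
  have "(\<lambda>x. (indicator S x *\<^sub>R g x) * (indicator S x *\<^sub>R f x)) \<in> borel_measurable M"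
    using f g unfolding set_integrable_def by measurable
  moreover have "(\<lambda>x. (indicator S x *\<^sub>R g x) * (indicator S x *\<^sub>R f x))
      = (\<lambda>x. indicator S x *\<^sub>R (g x * f x))"
    by (auto split: split_indicator)
  ultimately show "set_borel_measurable M S (\<lambda>x. g x * f x)"
    unfolding set_borel_measurable_def by simp
  have "\<bar>g x * f x\<bar> \<le> \<bar>B * g x\<bar>" if "x \<in> S" for x
    using bound[OF that] by (simp add: abs_mult mult_right_mono mult.commute)
  then show "AE x in M. x \<in> S \<longrightarrow> norm (g x * f x) \<le> norm (B * g x)"
    by simp
qed

lemma set_integrable_lborel_nonneg:
  fixes g :: "'a::euclidean_space \<Rightarrow> real"
  assumes "g integrable_on S" "\<And>x. x \<in> S \<Longrightarrow> 0 \<le> g x"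
    and "g \<in> borel_measurable borel" "S \<in> sets borel"
  shows "set_integrable lborel S g"
proof -
  have "set_integrable lebesgue S g"
    using nonnegative_absolutely_integrable_1[OF assms(1,2)] .
  moreover have "(\<lambda>x. indicator S x *\<^sub>R g x) \<in> borel_measurable lborel"
    using assms(3,4) by measurable
  ultimately show ?thesis
    unfolding set_integrable_def using integrable_completion by blast
qed

lemma RL_kernels_has_integral:
  fixes a c \<alpha> :: real
  assumes "a \<le> c" "0 < \<alpha>"
  shows "((\<lambda>t. (t - a) powr (\<alpha> - 1)) has_integral (c - a) powr \<alpha> / \<alpha>) {a..c}"
    and "((\<lambda>t. (c - t) powr (\<alpha> - 1)) has_integral (c - a) powr \<alpha> / \<alpha>) {a..c}"
proof -
  have "((\<lambda>t. t powr (\<alpha> - 1)) has_integral (c - a) powr \<alpha> / \<alpha>) {0..c - a}"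
    using has_integral_powr_from_0[of "\<alpha> - 1" "c - a"] assms by simp
  from has_integral_shift_real_ivl[OF this, of "-a"]
  show left: "((\<lambda>t. (t - a) powr (\<alpha> - 1)) has_integral (c - a) powr \<alpha> / \<alpha>) {a..c}"
    by simp
  from has_integral_reflect_Icc[OF left]
  show "((\<lambda>t. (c - t) powr (\<alpha> - 1)) has_integral (c - a) powr \<alpha> / \<alpha>) {a..c}"
    by (simp add: algebra_simps)
qed

lemma RL_sum_has_integral:
  fixes f :: "real \<Rightarrow> real" and a c \<alpha> B :: real
  assumes "a \<le> c" and "0 < \<alpha>" and f: "set_integrable lborel {a..c} f"
    and B: "\<And>x. x \<in> {a..c} \<Longrightarrow> \<bar>f x\<bar> \<le> B"
  shows "((\<lambda>t. ((c - t) powr (\<alpha> - 1) + (t - a) powr (\<alpha> - 1)) * f t)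
           has_integral Gamma \<alpha> * (RL_left \<alpha> a f c + RL_right \<alpha> c f a)) {a..c}"
proof -
  have kernel_f: "set_integrable lborel {a..c} (\<lambda>t. k t * f t)"
    if "k integrable_on {a..c}" "k \<in> borel_measurable borel" "\<And>t. 0 \<le> k t" for k
    using that by (intro set_integrable_mult_bounded[OF set_integrable_lborel_nonneg f B]) auto
  have "set_integrable lborel {a..c} (\<lambda>t. (c - t) powr (\<alpha> - 1) * f t)"
    and "set_integrable lborel {a..c} (\<lambda>t. (t - a) powr (\<alpha> - 1) * f t)"
    using RL_kernels_has_integral[OF assms(1,2)] by (auto intro!: kernel_f simp: integrable_on_def)
  from this[THEN set_borel_integral_eq_integral(1), THEN integrable_integral]
    this[THEN set_borel_integral_eq_integral(2)]
  have "((\<lambda>t. (c - t) powr (\<alpha> - 1) * f t + (t - a) powr (\<alpha> - 1) * f t)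
          has_integral (LINT t:{a..c}|lborel. (c - t) powr (\<alpha> - 1) * f t)
                     + (LINT t:{a..c}|lborel. (t - a) powr (\<alpha> - 1) * f t)) {a..c}"
    by (auto intro: has_integral_add)
  moreover have "Gamma \<alpha> \<noteq> 0"
    using Gamma_real_pos[OF \<open>0 < \<alpha>\<close>] by simp
  ultimately show ?thesis
    by (simp add: RL_left_def RL_right_def distrib_right add_divide_distrib[symmetric])
qed

theorem fractional_Hermite_Hadamard:
  fixes f :: "real \<Rightarrow> real" and a c \<alpha> :: real
  assumes conv: "convex_on {a..c} f" and "a < c"
    and f: "set_integrable lborel {a..c} f" and "0 < \<alpha>"
  defines "J \<equiv> Gamma (\<alpha> + 1) / (2 * (c - a) powr \<alpha>) * (RL_left \<alpha> a f c + RL_right \<alpha> c f a)"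
  shows "f ((a + c) / 2) \<le> J \<and> J \<le> (f a + f c) / 2"
proof -
  define K where "K = (c - a) powr \<alpha> / \<alpha>"
  define I where "I = Gamma \<alpha> * (RL_left \<alpha> a f c + RL_right \<alpha> c f a)"
  define w where "w t = (c - t) powr (\<alpha> - 1) + (t - a) powr (\<alpha> - 1)" for t
  have w: "(w has_integral 2 * K) {a..c}"
    using has_integral_add[OF RL_kernels_has_integral(2,1)[of a c \<alpha>]] assms
    unfolding w_def K_def by simp
  \<comment> \<open>Boundedness of \<open>f\<close> makes it integrable against the kernels, singular when \<open>\<alpha> < 1\<close>.\<close>
  obtain B where "\<And>x. x \<in> {a..c} \<Longrightarrow> \<bar>f x\<bar> \<le> B"
    using convex_on_Icc_abs_bound[OF conv] by blast
  from RL_sum_has_integral[OF _ \<open>0 < \<alpha>\<close> f this] \<open>a < c\<close>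
  have "((\<lambda>t. w t * f t) has_integral I) {a..c}"
    by (simp add: w_def I_def)
  with w have "f ((a + c) / 2) * (2 * K) \<le> I \<and> I \<le> (f a + f c) / 2 * (2 * K)"
    by (rule Hermite_Hadamard_Fejer[OF conv]) (auto simp: w_def algebra_simps)
  moreover have "J = I / (2 * K)"
  proof -
    have "Gamma (\<alpha> + 1) = \<alpha> * Gamma \<alpha>"
      using \<open>0 < \<alpha>\<close> by (intro Gamma_plus1) (auto elim!: nonpos_Ints_cases)
    then show ?thesis
      using \<open>0 < \<alpha>\<close> \<open>a < c\<close> by (simp add: J_def I_def K_def field_simps)
  qed
  moreover have "0 < K"
    using \<open>0 < \<alpha>\<close> \<open>a < c\<close> by (simp add: K_def)
  ultimately show ?thesis
    by (simp add: pos_le_divide_eq pos_divide_le_eq)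
qed

lemma preinvex_at_endpoint_le:
  assumes "a \<in> A" "b \<in> A" "preinvex f A \<eta>"
  shows "f (a + \<eta> b a) \<le> f b"
proof -
  have "f (a + 1 * \<eta> b a) \<le> (1 - 1) * f a + 1 * f b"
    using assms unfolding preinvex_def by (meson atLeastAtMost_iff order_refl zero_le_one)
  then show ?thesis by simp
qed

theorem theorem2p1:
  fixes A :: "real set" and \<eta> :: "real \<Rightarrow> real \<Rightarrow> real" and f :: "real \<Rightarrow> real"
    and a b \<alpha> :: real
  assumes "open A" and "invex A \<eta>" and "condition_C A \<eta>"
    and "a \<in> A" and "b \<in> A" and "a < a + \<eta> b a"
    and "\<forall>x\<in>A. f x > 0"
    and "preinvex f A \<eta>"
    and "set_integrable lborel {a..a + \<eta> b a} f"
    and "\<alpha> > 0"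
  shows "f ((2 * a + \<eta> b a) / 2)
           \<le> Gamma (\<alpha> + 1) / (2 * (\<eta> b a) powr \<alpha>) *
              (RL_left \<alpha> a f (a + \<eta> b a) + RL_right \<alpha> (a + \<eta> b a) f a)
       \<and> Gamma (\<alpha> + 1) / (2 * (\<eta> b a) powr \<alpha>) *
              (RL_left \<alpha> a f (a + \<eta> b a) + RL_right \<alpha> (a + \<eta> b a) f a)
           \<le> (f a + f (a + \<eta> b a)) / 2
       \<and> (f a + f (a + \<eta> b a)) / 2 \<le> (f a + f b) / 2"
proof -
  have "convex_on {a..a + \<eta> b a} f"
    using assms(6) by (intro preinvex_imp_convex_on_segment[OF assms(2-5) _ assms(8)]) simp
  from fractional_Hermite_Hadamard[OF this assms(6,9,10)]
  have "f ((a + (a + \<eta> b a)) / 2)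
          \<le> Gamma (\<alpha> + 1) / (2 * (\<eta> b a) powr \<alpha>) *
             (RL_left \<alpha> a f (a + \<eta> b a) + RL_right \<alpha> (a + \<eta> b a) f a)
        \<and> Gamma (\<alpha> + 1) / (2 * (\<eta> b a) powr \<alpha>) *
             (RL_left \<alpha> a f (a + \<eta> b a) + RL_right \<alpha> (a + \<eta> b a) f a)
          \<le> (f a + f (a + \<eta> b a)) / 2"
    by simp
  moreover have "f (a + \<eta> b a) \<le> f b"
    using preinvex_at_endpoint_le[OF assms(4,5,8)] .
  ultimately show ?thesis
    by (simp add: algebra_simps)
qed

end
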